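(* Let $a,b,p,q$ be positive real numbers and consider the system of difference equations $$y_{n+1}=\frac{a z_n}{p+z_n}e^{-y_n},\qquad z_{n+1}=\frac{b y_n}{q+y_n}e^{-z_n},\qquad n=0,1,2,\dots$$ with nonnegative initial values. (i) If $\frac{a}{p}<1$ and $\frac{b}{q}<1$, then the equilibrium $(0,0)$ is locally asymptotically stable. (ii) Suppose $ab>pq$, so that the system has a unique positive equilibrium $(\bar y,\bar z)$. Define $$y^*=\frac{ab-pq}{p+b},\quad z^*=\frac{ab-pq}{q+a},\quad y_*=\frac{ab\,e^{-(y^*+z^* )}-pq}{b e^{-z^*}+p},\quad z_*=\frac{ab\,e^{-(y^*+z^* )}-pq}{a e^{-y^*}+q}.$$ If $e^{y_*}>a$ and $e^{z_*}>b$, then $(\bar y,\bar z)$ is locally asymptotically stable.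
   Context: An equilibrium $(\bar y,\bar z)$ satisfies $\bar y=\frac{a\bar z}{p+\bar z}e^{-\bar y}$, $\bar z=\frac{b\bar y}{q+\bar y}e^{-\bar z}$. It is locally stable if for every $\varepsilon>0$ there is $\delta>0$ such that $|y_0-\bar y|+|z_0-\bar z|<\delta$ implies $|y_n-\bar y|+|z_n-\bar z|<\varepsilon$ for all $n\ge0$; it is locally asymptotically stable if it is locally stable and there is $\gamma>0$ such that $|y_0-\bar y|+|z_0-\bar z|<\gamma$ implies $y_n\to\bar y$, $z_n\to\bar z$. *)

theory Defs
  imports Complex_Main
begin

definition sys_step :: "real \<Rightarrow> real \<Rightarrow> real \<Rightarrow> real \<Rightarrow> real \<times> real \<Rightarrow> real \<times> real" where
  "sys_step a b p q yz =
     (a * snd yz / (p + snd yz) * exp (- fst yz), b * fst yz / (q + fst yz) * exp (- snd yz))"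

definition sys_orbit :: "real \<Rightarrow> real \<Rightarrow> real \<Rightarrow> real \<Rightarrow> real \<Rightarrow> real \<Rightarrow> nat \<Rightarrow> real \<times> real" where
  "sys_orbit a b p q y0 z0 n = (sys_step a b p q ^^ n) (y0, z0)"

definition is_equilibrium :: "real \<Rightarrow> real \<Rightarrow> real \<Rightarrow> real \<Rightarrow> real \<Rightarrow> real \<Rightarrow> bool" where
  "is_equilibrium a b p q ye ze \<longleftrightarrow>
     ye = a * ze / (p + ze) * exp (- ye) \<and> ze = b * ye / (q + ye) * exp (- ze)"

text \<open>Local stability, for nonnegative initial values (the system is only considered for those).\<close>
definition locally_stable :: "real \<Rightarrow> real \<Rightarrow> real \<Rightarrow> real \<Rightarrow> real \<Rightarrow> real \<Rightarrow> bool" where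
  "locally_stable a b p q ye ze \<longleftrightarrow>
     (\<forall>\<epsilon>>0. \<exists>\<delta>>0. \<forall>y0 z0. y0 \<ge> 0 \<and> z0 \<ge> 0 \<and> \<bar>y0 - ye\<bar> + \<bar>z0 - ze\<bar> < \<delta> \<longrightarrow>
        (\<forall>n. \<bar>fst (sys_orbit a b p q y0 z0 n) - ye\<bar> + \<bar>snd (sys_orbit a b p q y0 z0 n) - ze\<bar> < \<epsilon>))"

definition locally_asymptotically_stable :: "real \<Rightarrow> real \<Rightarrow> real \<Rightarrow> real \<Rightarrow> real \<Rightarrow> real \<Rightarrow> bool" where
  "locally_asymptotically_stable a b p q ye ze \<longleftrightarrow>
     locally_stable a b p q ye ze \<and>
     (\<exists>\<gamma>>0. \<forall>y0 z0. y0 \<ge> 0 \<and> z0 \<ge> 0 \<and> \<bar>y0 - ye\<bar> + \<bar>z0 - ze\<bar> < \<gamma> \<longrightarrow>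
        ((\<lambda>n. fst (sys_orbit a b p q y0 z0 n)) \<longlonglongrightarrow> ye) \<and>
        ((\<lambda>n. snd (sys_orbit a b p q y0 z0 n)) \<longlonglongrightarrow> ze))"

end

theory Submission
  imports Defs
begin

(* Part (i): on the nonnegative quadrant each component of the map is bounded by its linear part,
   so y' + z' <= max (a/p) (b/q) * (y + z) and the l1-norm decays geometrically.

   Part (ii): dropping the factors exp(-y), exp(-z) <= 1 from the equilibrium equations gives
   ye <= ys, ze <= zs; putting back the smaller factors exp(-ys), exp(-zs) then gives ye >= yl,
   ze >= zl.  So the hypotheses imply a exp(-ye) < 1 and b exp(-ze) < 1, which by the equilibrium
   equations say ye + p/(p+ze) < 1 and ze + q/(q+ye) < 1.  These are the absolute row sums of the
   Jacobian in the relative coordinates (y-ye)/ye, (z-ze)/ze, so the weighted maximum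
   norm max (|y-ye|/ye) (|z-ze|/ze) is contracted near the equilibrium. *)

lemma sys_orbit_0 [simp]: "sys_orbit a b p q y0 z0 0 = (y0, z0)"
  by (simp add: sys_orbit_def)

lemma sys_orbit_Suc [simp]:
  "sys_orbit a b p q y0 z0 (Suc n) = sys_step a b p q (sys_orbit a b p q y0 z0 n)"
  by (simp add: sys_orbit_def)

lemma sys_step_nonneg:
  assumes "a \<ge> 0" "b \<ge> 0" "p > 0" "q > 0" "fst x \<ge> 0" "snd x \<ge> 0"
  shows "fst (sys_step a b p q x) \<ge> 0" "snd (sys_step a b p q x) \<ge> 0"
  using assms by (simp_all add: sys_step_def)

lemma sys_orbit_nonneg:
  assumes "a \<ge> 0" "b \<ge> 0" "p > 0" "q > 0" "y0 \<ge> 0" "z0 \<ge> 0"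
  shows "fst (sys_orbit a b p q y0 z0 n) \<ge> 0 \<and> snd (sys_orbit a b p q y0 z0 n) \<ge> 0"
  by (induction n) (use assms sys_step_nonneg in auto)

lemma sys_orbit_contraction:
  fixes V :: "real \<times> real \<Rightarrow> real"
  assumes "a \<ge> 0" "b \<ge> 0" "p > 0" "q > 0" "y0 \<ge> 0" "z0 \<ge> 0"
    and "0 \<le> \<kappa>" "\<kappa> \<le> 1" "V (y0, z0) \<le> \<rho>"
    and V_nonneg: "\<And>x. V x \<ge> 0"
    and step: "\<And>x. fst x \<ge> 0 \<Longrightarrow> snd x \<ge> 0 \<Longrightarrow> V x \<le> \<rho> \<Longrightarrow>
      V (sys_step a b p q x) \<le> \<kappa> * V x"
  shows "V (sys_orbit a b p q y0 z0 n) \<le> \<kappa> ^ n * V (y0, z0)"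
proof (induction n)
  case 0
  then show ?case by simp
next
  case (Suc n)
  let ?x = "sys_orbit a b p q y0 z0 n"
  have "\<kappa> ^ n * V (y0, z0) \<le> V (y0, z0)"
    using assms V_nonneg by (simp add: mult_left_le_one_le power_le_one)
  with Suc.IH have "V ?x \<le> \<rho>" using assms by linarith
  then have "V (sys_step a b p q ?x) \<le> \<kappa> * V ?x"
    using step sys_orbit_nonneg[OF assms(1-6)] by blast
  also have "\<dots> \<le> \<kappa> * (\<kappa> ^ n * V (y0, z0))"
    using Suc.IH assms by (simp add: mult_left_mono)
  finally show ?case by simp
qed

definition l1_dist :: "real \<times> real \<Rightarrow> real \<times> real \<Rightarrow> real" where
  "l1_dist u v = \<bar>fst u - fst v\<bar> + \<bar>snd u - snd v\<bar>"

lemma locally_asymptotically_stable_by_contraction: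
  fixes V :: "real \<times> real \<Rightarrow> real"
  assumes "a \<ge> 0" "b \<ge> 0" "p > 0" "q > 0"
    and "0 \<le> \<kappa>" "\<kappa> < 1" "\<rho> > 0" "C > 0" "D > 0"
    and V_nonneg: "\<And>x. V x \<ge> 0"
    and dist_le_V: "\<And>x. l1_dist x (ye, ze) \<le> C * V x"
    and V_le_dist: "\<And>x. V x \<le> D * l1_dist x (ye, ze)"
    and step: "\<And>x. fst x \<ge> 0 \<Longrightarrow> snd x \<ge> 0 \<Longrightarrow> V x \<le> \<rho> \<Longrightarrow>
      V (sys_step a b p q x) \<le> \<kappa> * V x"
  shows "locally_asymptotically_stable a b p q ye ze"
proof -
  let ?d = "\<lambda>n y0 z0. l1_dist (sys_orbit a b p q y0 z0 n) (ye, ze)"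
  have decay: "?d n y0 z0 \<le> \<kappa> ^ n * (C * D * l1_dist (y0, z0) (ye, ze))"
    if "y0 \<ge> 0" "z0 \<ge> 0" "l1_dist (y0, z0) (ye, ze) < \<rho> / D" for y0 z0 n
  proof -
    have "V (y0, z0) \<le> \<rho>"
      using V_le_dist[of "(y0, z0)"] that(3) \<open>D > 0\<close> by (simp add: less_divide_eq mult.commute)
    then have V_decay: "V (sys_orbit a b p q y0 z0 n) \<le> \<kappa> ^ n * V (y0, z0)"
      using sys_orbit_contraction[OF assms(1-4) that(1,2) assms(5)] assms(6) V_nonneg step by simp
    have "?d n y0 z0 \<le> C * V (sys_orbit a b p q y0 z0 n)"
      by (rule dist_le_V)
    also have "\<dots> \<le> C * (\<kappa> ^ n * V (y0, z0))"
      using V_decay \<open>C > 0\<close> by simp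
    also have "\<dots> \<le> C * (\<kappa> ^ n * (D * l1_dist (y0, z0) (ye, ze)))"
      using V_le_dist \<open>C > 0\<close> \<open>0 \<le> \<kappa>\<close> by (simp add: mult_left_mono)
    finally show ?thesis
      by (simp add: ac_simps)
  qed
  have stable: "?d n y0 z0 < \<epsilon>"
    if "y0 \<ge> 0" "z0 \<ge> 0" "l1_dist (y0, z0) (ye, ze) < min (\<rho> / D) (\<epsilon> / (C * D))" for y0 z0 n \<epsilon>
  proof -
    have "?d n y0 z0 \<le> \<kappa> ^ n * (C * D * l1_dist (y0, z0) (ye, ze))"
      using decay that by simp
    also have "\<dots> \<le> C * D * l1_dist (y0, z0) (ye, ze)"
      using assms by (intro mult_left_le_one_le) (auto simp: l1_dist_def power_le_one)
    also have "\<dots> < \<epsilon>"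
      using that(3) assms by (simp add: less_divide_eq mult.commute)
    finally show ?thesis .
  qed
  have "locally_stable a b p q ye ze"
    unfolding locally_stable_def
  proof (intro allI impI)
    fix \<epsilon> :: real
    assume "\<epsilon> > 0"
    then show "\<exists>\<delta>>0. \<forall>y0 z0. y0 \<ge> 0 \<and> z0 \<ge> 0 \<and> \<bar>y0 - ye\<bar> + \<bar>z0 - ze\<bar> < \<delta> \<longrightarrow>
        (\<forall>n. \<bar>fst (sys_orbit a b p q y0 z0 n) - ye\<bar> + \<bar>snd (sys_orbit a b p q y0 z0 n) - ze\<bar> < \<epsilon>)"
      using stable[of _ _ \<epsilon>] assms
      by (intro exI[of _ "min (\<rho> / D) (\<epsilon> / (C * D))"]) (auto simp: l1_dist_def)
  qed
  moreover have "(\<lambda>n. fst (sys_orbit a b p q y0 z0 n)) \<longlonglongrightarrow> ye \<and>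
      (\<lambda>n. snd (sys_orbit a b p q y0 z0 n)) \<longlonglongrightarrow> ze"
    if "y0 \<ge> 0" "z0 \<ge> 0" "l1_dist (y0, z0) (ye, ze) < \<rho> / D" for y0 z0
  proof -
    let ?K = "C * D * l1_dist (y0, z0) (ye, ze)"
    have geometric: "(\<lambda>n. \<kappa> ^ n) \<longlonglongrightarrow> 0"
      using assms by (intro LIMSEQ_power_zero) simp
    have "norm (fst (sys_orbit a b p q y0 z0 n) - ye) \<le> norm (\<kappa> ^ n) * ?K"
      and "norm (snd (sys_orbit a b p q y0 z0 n) - ze) \<le> norm (\<kappa> ^ n) * ?K" for n
      using decay[OF that, of n] \<open>0 \<le> \<kappa>\<close> unfolding l1_dist_def real_norm_def fst_conv snd_conv
      by (simp_all add: abs_of_nonneg)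
    then have "(\<lambda>n. fst (sys_orbit a b p q y0 z0 n) - ye) \<longlonglongrightarrow> 0"
      and "(\<lambda>n. snd (sys_orbit a b p q y0 z0 n) - ze) \<longlonglongrightarrow> 0"
      by (auto intro!: tendsto_0_le[OF geometric] always_eventually)
    then show ?thesis
      by (simp add: LIM_zero_iff)
  qed
  ultimately show ?thesis
    unfolding locally_asymptotically_stable_def
    using assms by (intro conjI exI[of _ "\<rho> / D"]) (auto simp: l1_dist_def)
qed

lemma sys_component_le_linear:
  fixes a p y z :: real
  assumes "a \<ge> 0" "p > 0" "y \<ge> 0" "z \<ge> 0"
  shows "a * z / (p + z) * exp (- y) \<le> a / p * z"
proof -
  have "a * z / (p + z) * exp (- y) \<le> a * z / (p + z)"
    using assms by (intro mult_left_le) auto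
  also have "\<dots> \<le> a * z / p"
    using assms by (intro divide_left_mono) auto
  finally show ?thesis by simp
qed

lemma zero_equilibrium_locally_asymptotically_stable:
  fixes a b p q :: real
  assumes "a > 0" "b > 0" "p > 0" "q > 0" "a / p < 1" "b / q < 1"
  shows "locally_asymptotically_stable a b p q 0 0"
proof (rule locally_asymptotically_stable_by_contraction
    [where V = "\<lambda>x. l1_dist x (0, 0)" and \<kappa> = "max (a / p) (b / q)" and \<rho> = 1 and C = 1 and D = 1])
  fix x :: "real \<times> real"
  assume "fst x \<ge> 0" "snd x \<ge> 0"
  moreover have "fst (sys_step a b p q x) \<le> a / p * snd x" "snd (sys_step a b p q x) \<le> b / q * fst x"
    using calculation assms sys_component_le_linear[of a p "fst x" "snd x"]
      sys_component_le_linear[of b q "snd x" "fst x"] by (simp_all add: sys_step_def)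
  moreover have "a / p * snd x \<le> max (a / p) (b / q) * snd x"
    and "b / q * fst x \<le> max (a / p) (b / q) * fst x"
    using calculation by (intro mult_right_mono; simp)+
  ultimately show "l1_dist (sys_step a b p q x) (0, 0) \<le> max (a / p) (b / q) * l1_dist x (0, 0)"
    using sys_step_nonneg[of a b p q x] assms by (simp add: l1_dist_def distrib_left)
qed (use assms divide_pos_pos[of a p] in \<open>auto simp: l1_dist_def le_max_iff_disj\<close>)

lemma is_equilibrium_swap:
  "is_equilibrium a b p q y z \<longleftrightarrow> is_equilibrium b a q p z y"
  by (auto simp: is_equilibrium_def)

lemma is_equilibrium_iff:
  fixes a b p q y z :: real
  assumes "p > 0" "q > 0" "y > 0" "z > 0"
  shows "is_equilibrium a b p q y z \<longleftrightarrow> y * (p + z) = a * exp (- y) * z \<and> z * (q + y) = b * exp (- z) * y"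
  unfolding is_equilibrium_def using assms by (auto simp: field_simps)

(* (a b - p q) / (p + b) is the first coordinate of the positive fixed point of
   y = a z / (p + z), z = b y / (q + y); sub- and supersolutions lie below resp. above it. *)
lemma fixed_point_upper_bound:
  fixes a b p q y z :: real
  assumes "p > 0" "q > 0" "y > 0" "z > 0"
    and "y * (p + z) \<le> a * z" "z * (q + y) \<le> b * y"
  shows "y * (p + b) \<le> a * b - p * q"
proof -
  have "p * y \<le> z * (a - y)"
    using assms by (simp add: algebra_simps)
  moreover have "p * y > 0"
    using assms by simp
  ultimately have "z * (a - y) > 0"
    by linarith
  then have "a - y > 0"
    using \<open>z > 0\<close> by (simp add: zero_less_mult_iff)
  have "p * y * (q + y) \<le> z * (a - y) * (q + y)"
    using \<open>p * y \<le> z * (a - y)\<close> assms by (intro mult_right_mono) auto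
  also have "\<dots> = z * (q + y) * (a - y)"
    by simp
  also have "\<dots> \<le> b * y * (a - y)"
    using assms \<open>a - y > 0\<close> by (intro mult_right_mono) auto
  finally have "y * (p * (q + y)) \<le> y * (b * (a - y))"
    by (simp add: algebra_simps)
  then have "p * (q + y) \<le> b * (a - y)"
    using \<open>y > 0\<close> by simp
  then show ?thesis
    by (simp add: algebra_simps)
qed

lemma fixed_point_lower_bound:
  fixes a b p q y z :: real
  assumes "b > 0" "p > 0" "q > 0" "y > 0" "z > 0"
    and "a * z \<le> y * (p + z)" "b * y \<le> z * (q + y)"
  shows "a * b - p * q \<le> y * (p + b)"
proof (cases "a \<le> y")
  case True
  then have "a * b \<le> b * y"
    using assms by (simp add: mult.commute)
  moreover have "0 < p * q" "0 < p * y"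
    using assms by simp_all
  ultimately show ?thesis
    by (simp add: algebra_simps)
next
  case False
  have "b * y * (a - y) \<le> z * (q + y) * (a - y)"
    using assms False by (intro mult_right_mono) auto
  also have "\<dots> = z * (a - y) * (q + y)"
    by simp
  also have "\<dots> \<le> p * y * (q + y)"
    using assms by (intro mult_right_mono) (auto simp: algebra_simps)
  finally have "y * (b * (a - y)) \<le> y * (p * (q + y))"
    by (simp add: algebra_simps)
  then have "b * (a - y) \<le> p * (q + y)"
    using \<open>y > 0\<close> by simp
  then show ?thesis
    by (simp add: algebra_simps)
qed

lemma positive_equilibrium_upper_bound:
  fixes a b p q y z :: real
  assumes "a > 0" "b > 0" "p > 0" "q > 0" "y > 0" "z > 0" "is_equilibrium a b p q y z"
  shows "y \<le> (a * b - p * q) / (p + b)"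
proof -
  have "y * (p + z) = a * exp (- y) * z" "z * (q + y) = b * exp (- z) * y"
    using assms by (simp_all add: is_equilibrium_iff)
  moreover have "a * exp (- y) * z \<le> a * z" "b * exp (- z) * y \<le> b * y"
    using assms by (simp_all add: mult_left_le)
  ultimately have "y * (p + b) \<le> a * b - p * q"
    using assms by (intro fixed_point_upper_bound[of p q y z]) auto
  then show ?thesis
    using assms by (simp add: pos_le_divide_eq)
qed

lemma positive_equilibrium_lower_bound:
  fixes a b p q y z Y Z :: real
  assumes "a > 0" "b > 0" "p > 0" "q > 0" "y > 0" "z > 0" "is_equilibrium a b p q y z"
    and "y \<le> Y" "z \<le> Z"
  shows "(a * b * exp (- (Y + Z)) - p * q) / (b * exp (- Z) + p) \<le> y"
proof -
  have "y * (p + z) = a * exp (- y) * z" "z * (q + y) = b * exp (- z) * y"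
    using assms by (simp_all add: is_equilibrium_iff)
  moreover have "a * exp (- Y) * z \<le> a * exp (- y) * z" "b * exp (- Z) * y \<le> b * exp (- z) * y"
    using assms by (simp_all add: mult_right_mono)
  ultimately have "a * exp (- Y) * (b * exp (- Z)) - p * q \<le> y * (p + b * exp (- Z))"
    using assms by (intro fixed_point_lower_bound[of "b * exp (- Z)" p q y z]) auto
  moreover have "b * exp (- Z) + p > 0"
    using assms by (simp add: add_pos_pos)
  moreover have "exp (- (Y + Z)) = exp (- Y) * exp (- Z)"
    by (simp add: exp_add[symmetric])
  ultimately show ?thesis
    by (simp add: pos_divide_le_eq algebra_simps)
qed

lemma abs_exp_minus_one_le: "\<bar>exp x - 1\<bar> \<le> \<bar>x\<bar> * exp \<bar>x\<bar>" for x :: real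
proof (cases "x \<ge> 0")
  case True
  have "1 - x \<le> exp (- x)"
    using exp_ge_add_one_self[of "- x"] by simp
  then have "(1 - x) * exp x \<le> 1"
    by (simp add: exp_minus field_simps)
  with True show ?thesis
    by (simp add: algebra_simps)
next
  case False
  then show ?thesis
    using exp_ge_add_one_self[of x] by (smt (verit) exp_le_one_iff mult_le_cancel_left1 one_le_exp_iff)
qed

(* As N tends to 0 the factor after ye * N tends to p / (p + ze) + ye, the absolute row sum of
   the Jacobian of the first component in relative coordinates. *)
lemma sys_component_deviation:
  fixes a p ye ze y z N :: real
  assumes "p > 0" "ye > 0" "ze > 0" and equilibrium: "ye = a * ze / (p + ze) * exp (- ye)"
    and "0 \<le> N" "N < 1" "\<bar>y - ye\<bar> \<le> ye * N" "\<bar>z - ze\<bar> \<le> ze * N"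
  shows "\<bar>a * z / (p + z) * exp (- y) - ye\<bar> \<le> ye * N * (exp (ye * N) * (p / (p + ze * (1 - N)) + ye))"
proof -
  define \<phi> where "\<phi> = z * (p + ze) / (ze * (p + z))"
  define u where "u = y - ye"
  have z_lower: "ze * (1 - N) \<le> z"
    using assms by (simp add: algebra_simps abs_le_iff)
  have denom_pos: "0 < p + ze * (1 - N)"
    using assms by (simp add: add_pos_nonneg)
  have a_exp: "a * exp (- ye) = ye * (p + ze) / ze"
    using equilibrium assms by (simp add: field_simps)
  have "exp (- y) = exp (- ye) * exp (- u)"
    by (simp add: u_def exp_add[symmetric])
  then have "a * z / (p + z) * exp (- y) = a * exp (- ye) * (z / (p + z)) * exp (- u)"
    by simp
  also have "\<dots> = ye * (\<phi> * exp (- u))"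
    unfolding a_exp \<phi>_def by simp
  finally have "a * z / (p + z) * exp (- y) - ye = ye * (\<phi> * exp (- u) - 1)"
    by (simp add: algebra_simps)
  then have deviation_eq: "\<bar>a * z / (p + z) * exp (- y) - ye\<bar> = ye * \<bar>\<phi> * exp (- u) - 1\<bar>"
    using \<open>ye > 0\<close> by (simp add: abs_mult)
  have "p + ze * (1 - N) \<le> p + z"
    using z_lower by simp
  with denom_pos have "p + z > 0"
    by linarith
  have "\<bar>\<phi> - 1\<bar> = p * \<bar>z - ze\<bar> / (ze * (p + z))"
  proof -
    have "\<phi> - 1 = p * (z - ze) / (ze * (p + z))"
      using assms \<open>p + z > 0\<close> unfolding \<phi>_def by (simp add: divide_simps) (simp add: algebra_simps)
    then show ?thesis
      using assms \<open>p + z > 0\<close> by (simp add: abs_mult)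
  qed
  also have "\<dots> \<le> p * (ze * N) / (ze * (p + z))"
    using assms \<open>p + z > 0\<close> by (intro divide_right_mono mult_left_mono) auto
  also have "\<dots> = p * N / (p + z)"
    using assms by simp
  also have "\<dots> \<le> p * N / (p + ze * (1 - N))"
    using assms denom_pos \<open>p + ze * (1 - N) \<le> p + z\<close> by (intro divide_left_mono) auto
  finally have \<phi>_bound: "\<bar>\<phi> - 1\<bar> \<le> p * N / (p + ze * (1 - N))" .
  have u_bound: "\<bar>u\<bar> \<le> ye * N"
    using assms(7) by (simp add: u_def)
  then have "exp (- u) \<le> exp (ye * N)"
    by (simp add: abs_le_iff)
  have "\<bar>\<phi> * exp (- u) - 1\<bar> = \<bar>(\<phi> - 1) * exp (- u) + (exp (- u) - 1)\<bar>"
    by (simp add: algebra_simps)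
  also have "\<dots> \<le> \<bar>\<phi> - 1\<bar> * exp (- u) + \<bar>exp (- u) - 1\<bar>"
    by (metis abs_exp_cancel abs_mult abs_triangle_ineq)
  also have "\<dots> \<le> p * N / (p + ze * (1 - N)) * exp (ye * N) + ye * N * exp (ye * N)"
  proof (rule add_mono)
    show "\<bar>\<phi> - 1\<bar> * exp (- u) \<le> p * N / (p + ze * (1 - N)) * exp (ye * N)"
      using \<phi>_bound \<open>exp (- u) \<le> exp (ye * N)\<close> by (intro mult_mono) auto
    show "\<bar>exp (- u) - 1\<bar> \<le> ye * N * exp (ye * N)"
      using abs_exp_minus_one_le[of "- u"] u_bound assms
      by (smt (verit) exp_le_cancel_iff mult_mono abs_ge_zero exp_gt_zero)
  qed
  also have "\<dots> = N * (exp (ye * N) * (p / (p + ze * (1 - N)) + ye))"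
    by (simp add: field_simps)
  finally show ?thesis
    unfolding deviation_eq using \<open>ye > 0\<close> by (simp add: mult.assoc)
qed

lemma sys_component_contraction:
  fixes a p ye ze :: real
  assumes "p > 0" "ye > 0" "ze > 0" and equilibrium: "ye = a * ze / (p + ze) * exp (- ye)"
    and gain: "a * exp (- ye) < 1"
  obtains \<rho> \<kappa> where "\<rho> > 0" "0 \<le> \<kappa>" "\<kappa> < 1"
    and "\<And>y z N. 0 \<le> N \<Longrightarrow> N \<le> \<rho> \<Longrightarrow> \<bar>y - ye\<bar> \<le> ye * N \<Longrightarrow> \<bar>z - ze\<bar> \<le> ze * N \<Longrightarrow>
      \<bar>a * z / (p + z) * exp (- y) - ye\<bar> \<le> \<kappa> * (ye * N)"
proof -
  define K where "K N = exp (ye * N) * (p / (p + ze * (1 - N)) + ye)" for N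
  have "ye * (p + ze) = a * exp (- ye) * ze"
    using equilibrium assms by (simp add: field_simps)
  also have "\<dots> < ze"
    using gain \<open>ze > 0\<close> by simp
  finally have "K 0 < 1"
    using assms by (simp add: K_def field_simps)
  define \<kappa> where "\<kappa> = (K 0 + 1) / 2"
  have "K 0 > 0"
    using assms by (simp add: K_def add_pos_pos)
  then have \<kappa>: "0 \<le> \<kappa>" "\<kappa> < 1" "K 0 < \<kappa>"
    using \<open>K 0 < 1\<close> by (simp_all add: \<kappa>_def)
  have "isCont K 0"
    unfolding K_def using assms by (intro continuous_intros) auto
  then have "(K \<longlongrightarrow> K 0) (nhds 0)"
    by (simp add: isCont_def tendsto_at_iff_tendsto_nhds)
  then have "\<forall>\<^sub>F N in nhds 0. K N < \<kappa>"
    using \<kappa>(3) by (rule order_tendstoD)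
  then obtain d where "d > 0" and d: "\<And>N. \<bar>N\<bar> < d \<Longrightarrow> K N < \<kappa>"
    unfolding eventually_nhds_metric dist_real_def by auto
  define \<rho> where "\<rho> = min (d / 2) (1 / 2)"
  show ?thesis
  proof (rule that[of \<rho> \<kappa>])
    fix y z N :: real
    assume N: "0 \<le> N" "N \<le> \<rho>" and "\<bar>y - ye\<bar> \<le> ye * N" "\<bar>z - ze\<bar> \<le> ze * N"
    then have "\<bar>a * z / (p + z) * exp (- y) - ye\<bar> \<le> ye * N * K N"
      unfolding K_def using assms by (intro sys_component_deviation) (auto simp: \<rho>_def)
    also have "\<dots> \<le> ye * N * \<kappa>"
      using d[of N] N \<open>d > 0\<close> \<open>ye > 0\<close> by (intro mult_left_mono) (auto simp: \<rho>_def)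
    finally show "\<bar>a * z / (p + z) * exp (- y) - ye\<bar> \<le> \<kappa> * (ye * N)"
      by (simp add: ac_simps)
  qed (use \<kappa> \<open>d > 0\<close> in \<open>auto simp: \<rho>_def\<close>)
qed

definition rel_dev :: "real \<Rightarrow> real \<Rightarrow> real \<times> real \<Rightarrow> real" where
  "rel_dev ye ze x = max (\<bar>fst x - ye\<bar> / ye) (\<bar>snd x - ze\<bar> / ze)"

lemma rel_dev_nonneg: "ye > 0 \<Longrightarrow> ze > 0 \<Longrightarrow> 0 \<le> rel_dev ye ze x"
  by (simp add: rel_dev_def le_max_iff_disj)

lemma abs_le_rel_dev:
  assumes "ye > 0" "ze > 0"
  shows "\<bar>fst x - ye\<bar> \<le> ye * rel_dev ye ze x" "\<bar>snd x - ze\<bar> \<le> ze * rel_dev ye ze x"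
proof -
  have "\<bar>fst x - ye\<bar> / ye \<le> rel_dev ye ze x" "\<bar>snd x - ze\<bar> / ze \<le> rel_dev ye ze x"
    by (simp_all add: rel_dev_def)
  then show "\<bar>fst x - ye\<bar> \<le> ye * rel_dev ye ze x" "\<bar>snd x - ze\<bar> \<le> ze * rel_dev ye ze x"
    using assms by (simp_all add: pos_divide_le_eq mult.commute)
qed

lemma l1_dist_le_rel_dev:
  "ye > 0 \<Longrightarrow> ze > 0 \<Longrightarrow> l1_dist x (ye, ze) \<le> (ye + ze) * rel_dev ye ze x"
  using abs_le_rel_dev[of ye ze x] by (simp add: l1_dist_def distrib_right)

lemma rel_dev_le_l1_dist:
  assumes "ye > 0" "ze > 0"
  shows "rel_dev ye ze x \<le> 1 / min ye ze * l1_dist x (ye, ze)"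
proof -
  have "\<bar>fst x - ye\<bar> / ye \<le> l1_dist x (ye, ze) / min ye ze"
    and "\<bar>snd x - ze\<bar> / ze \<le> l1_dist x (ye, ze) / min ye ze"
    using assms by (intro frac_le; simp add: l1_dist_def)+
  then show ?thesis
    by (simp add: rel_dev_def)
qed

lemma positive_equilibrium_locally_asymptotically_stable:
  fixes a b p q ye ze :: real
  assumes "a > 0" "b > 0" "p > 0" "q > 0" "ye > 0" "ze > 0" "is_equilibrium a b p q ye ze"
    and "a * exp (- ye) < 1" "b * exp (- ze) < 1"
  shows "locally_asymptotically_stable a b p q ye ze"
proof -
  have E1: "ye = a * ze / (p + ze) * exp (- ye)" and E2: "ze = b * ye / (q + ye) * exp (- ze)"
    using assms(7) by (simp_all add: is_equilibrium_def)
  obtain \<rho>1 \<kappa>1 where "\<rho>1 > 0" "0 \<le> \<kappa>1" "\<kappa>1 < 1" and contract1: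
    "\<And>y z N. 0 \<le> N \<Longrightarrow> N \<le> \<rho>1 \<Longrightarrow> \<bar>y - ye\<bar> \<le> ye * N \<Longrightarrow> \<bar>z - ze\<bar> \<le> ze * N \<Longrightarrow>
      \<bar>a * z / (p + z) * exp (- y) - ye\<bar> \<le> \<kappa>1 * (ye * N)"
    by (rule sys_component_contraction[OF \<open>p > 0\<close> \<open>ye > 0\<close> \<open>ze > 0\<close> E1 assms(8)]) blast
  obtain \<rho>2 \<kappa>2 where "\<rho>2 > 0" "0 \<le> \<kappa>2" "\<kappa>2 < 1" and contract2:
    "\<And>z y N. 0 \<le> N \<Longrightarrow> N \<le> \<rho>2 \<Longrightarrow> \<bar>z - ze\<bar> \<le> ze * N \<Longrightarrow> \<bar>y - ye\<bar> \<le> ye * N \<Longrightarrow>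
      \<bar>b * y / (q + y) * exp (- z) - ze\<bar> \<le> \<kappa>2 * (ze * N)"
    by (rule sys_component_contraction[OF \<open>q > 0\<close> \<open>ze > 0\<close> \<open>ye > 0\<close> E2 assms(9)]) blast
  let ?V = "rel_dev ye ze"
  show ?thesis
  proof (rule locally_asymptotically_stable_by_contraction[where V = ?V and \<kappa> = "max \<kappa>1 \<kappa>2"
        and \<rho> = "min \<rho>1 \<rho>2" and C = "ye + ze" and D = "1 / min ye ze"])
    fix x :: "real \<times> real"
    assume "?V x \<le> min \<rho>1 \<rho>2"
    then have N: "0 \<le> ?V x" "?V x \<le> \<rho>1" "?V x \<le> \<rho>2"
      using rel_dev_nonneg[OF assms(5,6)] by simp_all
    note deviations = abs_le_rel_dev[OF assms(5,6), of x]
    have "\<bar>fst (sys_step a b p q x) - ye\<bar> / ye \<le> \<kappa>1 * ?V x"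
      using contract1[OF N(1,2) deviations] assms(5) by (simp add: sys_step_def pos_divide_le_eq ac_simps)
    moreover have "\<bar>snd (sys_step a b p q x) - ze\<bar> / ze \<le> \<kappa>2 * ?V x"
      using contract2[OF N(1,3) deviations(2,1)] assms(6) by (simp add: sys_step_def pos_divide_le_eq ac_simps)
    moreover have "\<kappa>1 * ?V x \<le> max \<kappa>1 \<kappa>2 * ?V x" "\<kappa>2 * ?V x \<le> max \<kappa>1 \<kappa>2 * ?V x"
      using N(1) by (simp_all add: mult_right_mono)
    ultimately show "?V (sys_step a b p q x) \<le> max \<kappa>1 \<kappa>2 * ?V x"
      by (simp add: rel_dev_def)
  qed (use assms \<open>\<kappa>1 < 1\<close> \<open>\<kappa>2 < 1\<close> \<open>0 \<le> \<kappa>1\<close> \<open>\<rho>1 > 0\<close> \<open>\<rho>2 > 0\<close>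
      rel_dev_nonneg l1_dist_le_rel_dev rel_dev_le_l1_dist in \<open>simp_all add: le_max_iff_disj\<close>)
qed

theorem theorem3p2:
  fixes a b p q :: real
  assumes "a > 0" and "b > 0" and "p > 0" and "q > 0"
  shows "(a / p < 1 \<and> b / q < 1 \<longrightarrow> locally_asymptotically_stable a b p q 0 0)
    \<and> (a * b > p * q \<longrightarrow>
        (let ys = (a * b - p * q) / (p + b);
             zs = (a * b - p * q) / (q + a);
             yl = (a * b * exp (- (ys + zs)) - p * q) / (b * exp (- zs) + p);
             zl = (a * b * exp (- (ys + zs)) - p * q) / (a * exp (- ys) + q)
         in exp yl > a \<and> exp zl > b \<longrightarrow>
            (\<forall>ye ze. ye > 0 \<and> ze > 0 \<and> is_equilibrium a b p q ye ze \<longrightarrow>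
               locally_asymptotically_stable a b p q ye ze)))"
proof -
  define ys where "ys = (a * b - p * q) / (p + b)"
  define zs where "zs = (a * b - p * q) / (q + a)"
  have "locally_asymptotically_stable a b p q ye ze"
    if yl: "a < exp ((a * b * exp (- (ys + zs)) - p * q) / (b * exp (- zs) + p))"
      and zl: "b < exp ((a * b * exp (- (ys + zs)) - p * q) / (a * exp (- ys) + q))"
      and eq: "ye > 0" "ze > 0" "is_equilibrium a b p q ye ze" for ye ze
  proof -
    note swapped = eq(2,1) is_equilibrium_swap[THEN iffD1, OF eq(3)]
    have "ye \<le> ys" "ze \<le> zs"
      using positive_equilibrium_upper_bound[OF assms eq]
        positive_equilibrium_upper_bound[OF assms(2,1,4,3) swapped]
      by (simp_all add: ys_def zs_def ac_simps)
    then have "(a * b * exp (- (ys + zs)) - p * q) / (b * exp (- zs) + p) \<le> ye"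
      and "(a * b * exp (- (ys + zs)) - p * q) / (a * exp (- ys) + q) \<le> ze"
      using positive_equilibrium_lower_bound[OF assms eq \<open>ye \<le> ys\<close> \<open>ze \<le> zs\<close>]
        positive_equilibrium_lower_bound[OF assms(2,1,4,3) swapped \<open>ze \<le> zs\<close> \<open>ye \<le> ys\<close>]
      by (simp_all add: ac_simps)
    then have "a < exp ye" "b < exp ze"
      using yl zl by (meson exp_le_cancel_iff less_le_trans)+
    then have "a * exp (- ye) < 1" "b * exp (- ze) < 1"
      by (simp_all add: exp_minus field_simps)
    then show ?thesis
      by (rule positive_equilibrium_locally_asymptotically_stable[OF assms eq])
  qed
  then show ?thesis
    unfolding Let_def ys_def zs_def using zero_equilibrium_locally_asymptotically_stable assms by auto
qed

end
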